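(* Let $\mathbb{X}$ be an $n$-dimensional real polyhedral Banach space and $x\in S_{\mathbb{X}}$. Then $x$ is $k$-smooth if and only if $x$ is a (relative) interior point of an $(n-k)$-face of $B_{\mathbb{X}}$.
   Context: $\mathbb{X}$ is polyhedral if $B_{\mathbb{X}}$ has finitely many extreme points. For $x\in S_{\mathbb{X}}$, $J(x)=\{f\in\mathbb{X}^*:\|f\|=1,f(x)=1\}$ and $x$ is $k$-smooth if $\dim\operatorname{span}J(x)=k$. A convex set $F\subset S_{\mathbb{X}}$ is a face of $B_{\mathbb{X}}$ if whenever $x_1,x_2\in S_{\mathbb{X}}$ and $(1-t)x_1+tx_2\in F$ for some $0<t<1$, then $x_1,x_2\in F$. The dimension of $F$ is the dimension of the span of $\{v-w:v,w\in F\}$; $F$ is an $i$-face if its dimension is $i$. Interior means interior relative to the affine hull of $F$. *)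

theory Defs
  imports "HOL-Analysis.Analysis"
begin

definition supp_functionals :: "'a::real_normed_vector \<Rightarrow> ('a \<Rightarrow>\<^sub>L real) set" where
  "supp_functionals x = {f. norm f = 1 \<and> blinfun_apply f x = 1}"

definition k_smooth :: "nat \<Rightarrow> 'a::real_normed_vector \<Rightarrow> bool" where
  "k_smooth k x \<longleftrightarrow> dim (span (supp_functionals x)) = k"

definition polyhedral_space :: "'a::real_normed_vector itself \<Rightarrow> bool" where
  "polyhedral_space TYPE('a) \<longleftrightarrow> finite {e::'a. e extreme_point_of cball 0 1}"

definition ball_face :: "'a::real_normed_vector set \<Rightarrow> bool" where
  "ball_face F \<longleftrightarrow> convex F \<and> F \<subseteq> sphere 0 1 \<and>
     (\<forall>x1 x2 t. x1 \<in> sphere 0 1 \<longrightarrow> x2 \<in> sphere 0 1 \<longrightarrow> 0 < t \<longrightarrow> t < 1 \<longrightarrow>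
        (1 - t) *\<^sub>R x1 + t *\<^sub>R x2 \<in> F \<longrightarrow> x1 \<in> F \<and> x2 \<in> F)"

definition face_dim :: "'a::real_vector set \<Rightarrow> nat" where
  "face_dim F = dim (span {v - w | v w. v \<in> F \<and> w \<in> F})"

end

theory Submission
  imports Defs
begin

text \<open>In finite dimensions the unit ball is the convex hull of its extreme points, and
  approximating supporting functionals by projections in an auxiliary Euclidean metric shows
  that a polyhedral norm is the maximum of finitely many functionals \<open>\<Phi>\<close> of norm one.
  Then the face \<open>F\<^sub>x = {z \<in> B. f z = 1 for all f \<in> J(x)}\<close> contains \<open>x\<close> in its relative
  interior: near \<open>x\<close>, only the members of \<open>\<Phi>\<close> supporting \<open>x\<close> matter. For every face \<open>F\<close>
  with \<open>x\<close> in its relative interior, the direction space of \<open>F\<close> is the common kernel of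
  \<open>J(x)\<close>: functionals in \<open>J(x)\<close> are maximal at the interior point \<open>x\<close> of \<open>F\<close>, and
  conversely a kernel direction \<open>d\<close> gives points \<open>x \<plusminus> \<eta> d\<close> of the sphere whose midpoint
  \<open>x\<close> lies in \<open>F\<close>. Hence \<open>dim F + dim span J(x) = n\<close>.\<close>

lemma convex_comb_eq_upper_bound:
  fixes a b M t :: real
  assumes "a \<le> M" "b \<le> M" "0 < t" "t < 1" "(1 - t) * a + t * b = M"
  shows "a = M" "b = M"
proof -
  have "(1 - t) * (M - a) + t * (M - b) = 0"
    using assms(5) by (simp add: algebra_simps)
  moreover have "(1 - t) * (M - a) \<ge> 0" "t * (M - b) \<ge> 0"
    using assms(1-4) by simp_all
  ultimately have "(1 - t) * (M - a) = 0" "t * (M - b) = 0"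
    by linarith+
  with assms(3,4) show "a = M" "b = M" by simp_all
qed

lemma finite_uniform_step:
  fixes a b :: "'f \<Rightarrow> real"
  assumes "finite S" "\<And>f. f \<in> S \<Longrightarrow> b f > 0"
  obtains \<epsilon> where "\<epsilon> > 0" "\<And>f t. f \<in> S \<Longrightarrow> 0 \<le> t \<Longrightarrow> t \<le> \<epsilon> \<Longrightarrow> t * a f < b f"
proof -
  define T where "T = insert 1 ((\<lambda>f. b f / (\<bar>a f\<bar> + 1)) ` S)"
  have "finite T" "T \<noteq> {}" "\<forall>s\<in>T. s > 0"
    using assms by (auto simp: T_def)
  then have "Min T > 0"
    by simp
  moreover have "t * a f < b f" if "f \<in> S" "0 \<le> t" "t \<le> Min T" for f t
  proof -
    have "t \<le> b f / (\<bar>a f\<bar> + 1)"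
      using that \<open>finite T\<close> by (auto simp: T_def intro: order_trans[OF _ Min_le])
    then have "t * \<bar>a f\<bar> \<le> b f / (\<bar>a f\<bar> + 1) * \<bar>a f\<bar>"
      by (rule mult_right_mono) simp
    also have "\<dots> < b f"
      using assms(2)[OF that(1)] by (simp add: field_simps)
    finally show ?thesis
      using mult_left_mono[OF abs_ge_self that(2), of "a f"] by linarith
  qed
  ultimately show ?thesis
    using that by blast
qed

lemma linear_blinfun_apply: "linear (blinfun_apply f)"
  by (rule bounded_linear.linear[OF blinfun.bounded_linear_right])

lemma blinfun_le_norm: "norm f \<le> 1 \<Longrightarrow> blinfun_apply f v \<le> norm (v::'a::real_normed_vector)"
  using norm_blinfun[of f v] mult_right_mono[of "norm f" 1 "norm v"] by simp

lemma blinfun_of_le_one_on_cball: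
  fixes g :: "'a::real_normed_vector \<Rightarrow> real"
  assumes "linear g" "\<And>v. norm v \<le> 1 \<Longrightarrow> g v \<le> 1"
  obtains gb where "blinfun_apply gb = g" "norm gb \<le> 1"
proof -
  have "\<bar>g v\<bar> \<le> norm v" for v
  proof (cases "v = 0")
    case False
    then have "g ((1 / norm v) *\<^sub>R v) \<le> 1" "g ((- 1 / norm v) *\<^sub>R v) \<le> 1"
      by (auto intro!: assms(2))
    then show ?thesis
      using False by (simp add: linear_scale[OF assms(1)] linear_neg[OF assms(1)] abs_le_iff field_simps)
  qed (simp add: linear_0[OF assms(1)])
  then have "bounded_linear g"
    using assms(1) by (intro bounded_linear_intro[of _ 1]) (auto simp: linear_add linear_scale)
  with \<open>\<And>v. \<bar>g v\<bar> \<le> norm v\<close> show ?thesis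
    using that[of "Blinfun g"] by (simp add: bounded_linear_Blinfun_apply norm_blinfun_bound)
qed

lemma convex_hull_level_set:
  fixes g :: "'a::real_vector \<Rightarrow> real"
  assumes "finite E" "linear g" "\<And>e. e \<in> E \<Longrightarrow> g e \<le> 1" "z \<in> convex hull E" "g z = 1"
  shows "z \<in> convex hull {e \<in> E. g e = 1}" (is "_ \<in> convex hull ?A")
proof -
  obtain u where u: "\<forall>e\<in>E. 0 \<le> u e" "sum u E = 1" "(\<Sum>e\<in>E. u e *\<^sub>R e) = z"
    using assms(4) convex_hull_finite[OF assms(1)] by auto
  have "g z = (\<Sum>e\<in>E. u e * g e)"
    using u(3)[symmetric] by (simp add: linear_sum[OF assms(2)] linear_scale[OF assms(2)])
  then have "(\<Sum>e\<in>E. u e * (1 - g e)) = 0"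
    using assms(5) u(2) by (simp add: right_diff_distrib sum_subtractf)
  moreover have "\<forall>e\<in>E. u e * (1 - g e) \<ge> 0"
    using u(1) assms(3) by simp
  ultimately have "\<forall>e\<in>E. u e * (1 - g e) = 0"
    using sum_nonneg_eq_0_iff[OF assms(1), of "\<lambda>e. u e * (1 - g e)"] by simp
  then have zero: "\<forall>e\<in>E - ?A. u e = 0" "\<forall>e\<in>E - ?A. u e *\<^sub>R e = 0"
    by auto
  have "?A \<subseteq> E" "finite ?A"
    using assms(1) by auto
  then have "sum u ?A = 1" "(\<Sum>e\<in>?A. u e *\<^sub>R e) = z"
    using u(2,3) sum.mono_neutral_right[OF assms(1) \<open>?A \<subseteq> E\<close> zero(1)]
      sum.mono_neutral_right[OF assms(1) \<open>?A \<subseteq> E\<close> zero(2)] by simp_all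
  then show ?thesis
    unfolding convex_hull_finite[OF \<open>finite ?A\<close>]
    by (intro CollectI exI[of _ u]) (use u(1) in auto)
qed

lemma linear_eq_one_on_convex_hull:
  fixes g :: "'a::real_vector \<Rightarrow> real"
  assumes "linear g" "\<And>a. a \<in> A \<Longrightarrow> g a = 1" "y \<in> convex hull A"
  shows "g y = 1"
proof -
  have "convex hull A \<subseteq> g -` {1}"
    using assms(2) by (intro hull_minimal convex_linear_vimage[OF assms(1)]) auto
  with assms(3) show ?thesis by auto
qed


section \<open>Supporting functionals and faces\<close>

lemma supp_functional_le_norm: "f \<in> supp_functionals x \<Longrightarrow> blinfun_apply f v \<le> norm v"
  unfolding supp_functionals_def by (auto intro: blinfun_le_norm)

definition annihilator :: "('a::real_normed_vector \<Rightarrow>\<^sub>L real) set \<Rightarrow> 'a set" where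
  "annihilator G = {d. \<forall>g\<in>G. blinfun_apply g d = 0}"

lemma subspace_annihilator: "subspace (annihilator G)"
  unfolding subspace_def annihilator_def by (simp add: blinfun.add_right blinfun.scaleR_right)

lemma annihilator_antimono: "G \<subseteq> H \<Longrightarrow> annihilator H \<subseteq> annihilator G"
  by (auto simp: annihilator_def)

lemma annihilator_span: "annihilator (span G) = annihilator G"
proof
  show "annihilator (span G) \<subseteq> annihilator G"
    using span_superset by (auto simp: annihilator_def)
  show "annihilator G \<subseteq> annihilator (span G)"
  proof
    fix d assume "d \<in> annihilator G"
    moreover have "subspace {g::'a \<Rightarrow>\<^sub>L real. blinfun_apply g d = 0}"
      unfolding subspace_def by (simp add: blinfun.add_left blinfun.scaleR_left)
    ultimately have "span G \<subseteq> {g. blinfun_apply g d = 0}"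
      by (intro span_minimal) (auto simp: annihilator_def)
    then show "d \<in> annihilator (span G)"
      by (auto simp: annihilator_def)
  qed
qed

definition supp_face :: "'a::real_normed_vector \<Rightarrow> 'a set" where
  "supp_face x = {z. norm z \<le> 1 \<and> (\<forall>f\<in>supp_functionals x. blinfun_apply f z = 1)}"

lemma ball_face_supp_face:
  assumes "supp_functionals x \<noteq> {}"
  shows "ball_face (supp_face x)"
  unfolding ball_face_def
proof (intro conjI allI impI)
  have "supp_face x = cball 0 1 \<inter> (\<Inter>f\<in>supp_functionals x. blinfun_apply f -` {1})"
    by (auto simp: supp_face_def)
  then show "convex (supp_face x)"
    by (simp add: convex_Int convex_INT convex_linear_vimage linear_blinfun_apply)
  obtain f0 where "f0 \<in> supp_functionals x"
    using assms by blast
  then have "norm z = 1" if "z \<in> supp_face x" for z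
    using that supp_functional_le_norm[of f0 x z] by (auto simp: supp_face_def intro!: antisym)
  then show "supp_face x \<subseteq> sphere 0 1"
    by auto
  fix x1 x2 and t :: real
  assume x12: "x1 \<in> sphere 0 1" "x2 \<in> sphere 0 1" and t: "0 < t" "t < 1"
    and "(1 - t) *\<^sub>R x1 + t *\<^sub>R x2 \<in> supp_face x"
  then have "(1 - t) * blinfun_apply f x1 + t * blinfun_apply f x2 = 1" if "f \<in> supp_functionals x" for f
    using that by (simp add: supp_face_def blinfun.add_right blinfun.scaleR_right)
  moreover have "blinfun_apply f x1 \<le> 1" "blinfun_apply f x2 \<le> 1" if "f \<in> supp_functionals x" for f
    using supp_functional_le_norm[OF that, of x1] supp_functional_le_norm[OF that, of x2] x12
    by simp_all
  ultimately have "blinfun_apply f x1 = 1 \<and> blinfun_apply f x2 = 1" if "f \<in> supp_functionals x" for f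
    using convex_comb_eq_upper_bound[OF _ _ t] that by blast
  with x12 show "x1 \<in> supp_face x" "x2 \<in> supp_face x"
    by (simp_all add: supp_face_def)
qed

lemma supp_functional_vanishes_on_face:
  assumes F: "ball_face F" and x: "x \<in> rel_interior F"
    and f: "f \<in> supp_functionals x" and vw: "v \<in> F" "w \<in> F"
  shows "blinfun_apply f (v - w) = 0"
proof -
  obtain e where e: "e > 0" "ball x e \<inter> affine hull F \<subseteq> F"
    using x unfolding mem_rel_interior_ball by blast
  define t where "t = e / (norm (v - w) + 1)"
  have "norm (v - w) + 1 > 0"
    by (simp add: add_nonneg_pos)
  then have t: "t > 0" "t * norm (v - w) < e"
    using e(1) mult_strict_left_mono[of "norm (v - w)" "norm (v - w) + 1" t]
    by (simp_all add: t_def)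
  have "c * blinfun_apply f (v - w) \<le> 0" if "\<bar>c\<bar> = t" for c
  proof -
    have "x + c *\<^sub>R (v - w) \<in> affine hull F"
      using mem_affine_3_minus[OF affine_affine_hull, of x F v w c] x vw
      by (simp add: hull_inc rel_interior_subset[THEN subsetD])
    moreover have "x + c *\<^sub>R (v - w) \<in> ball x e"
      using t that by (simp add: dist_norm)
    ultimately have "x + c *\<^sub>R (v - w) \<in> F"
      using e(2) by blast
    then have "norm (x + c *\<^sub>R (v - w)) = 1"
      using F unfolding ball_face_def by auto
    then show ?thesis
      using supp_functional_le_norm[OF f, of "x + c *\<^sub>R (v - w)"] f
      by (simp add: supp_functionals_def blinfun.add_right blinfun.scaleR_right)
  qed
  from this[of t] this[of "- t"] t(1) have "t * blinfun_apply f (v - w) = 0"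
    by simp
  with t(1) show ?thesis
    by simp
qed

locale finite_norming_family =
  fixes \<Phi> :: "('a::real_normed_vector \<Rightarrow>\<^sub>L real) set"
  assumes finite_\<Phi>: "finite \<Phi>"
    and norm_le_one: "f \<in> \<Phi> \<Longrightarrow> norm f \<le> 1"
    and norming: "norm y = 1 \<Longrightarrow> \<exists>f\<in>\<Phi>. blinfun_apply f y = 1"
begin

lemma norming_attained:
  fixes v :: 'a
  assumes "v \<noteq> 0"
  shows "\<exists>f\<in>\<Phi>. blinfun_apply f v = norm v"
proof -
  obtain f where "f \<in> \<Phi>" "blinfun_apply f ((1 / norm v) *\<^sub>R v) = 1"
    using norming[of "(1 / norm v) *\<^sub>R v"] assms by auto
  with assms show ?thesis
    by (auto simp: blinfun.scaleR_right field_simps)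
qed

lemma norming_mem_supp_functionals:
  fixes x :: 'a
  assumes "f \<in> \<Phi>" "norm x = 1" "blinfun_apply f x = 1"
  shows "f \<in> supp_functionals x"
  using assms norm_le_one[OF assms(1)] norm_blinfun[of f x]
  unfolding supp_functionals_def by auto

lemma supp_functionals_nonempty: "norm (x::'a) = 1 \<Longrightarrow> supp_functionals x \<noteq> {}"
  using norming norming_mem_supp_functionals by blast

text \<open>Only the finitely many functionals of \<open>\<Phi>\<close> that do not support \<open>x\<close> constrain a short
  step from \<open>x\<close>, and they do so with a uniform margin.\<close>
lemma step_stays_in_ball:
  fixes x :: 'a
  assumes x: "norm x = 1" and d: "\<And>f. f \<in> supp_functionals x \<Longrightarrow> blinfun_apply f d \<le> 0"
  obtains \<epsilon> where "\<epsilon> > 0" "\<And>t. 0 \<le> t \<Longrightarrow> t \<le> \<epsilon> \<Longrightarrow> norm (x + t *\<^sub>R d) \<le> 1"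
proof -
  obtain \<epsilon> where \<epsilon>: "\<epsilon> > 0" "\<And>f t. f \<in> {f \<in> \<Phi>. blinfun_apply f x < 1} \<Longrightarrow> 0 \<le> t \<Longrightarrow> t \<le> \<epsilon> \<Longrightarrow>
      t * blinfun_apply f d < 1 - blinfun_apply f x"
    using finite_uniform_step[where S = "{f \<in> \<Phi>. blinfun_apply f x < 1}"
        and a = "\<lambda>f. blinfun_apply f d" and b = "\<lambda>f. 1 - blinfun_apply f x"] finite_\<Phi> by auto
  have "norm (x + t *\<^sub>R d) \<le> 1" if t: "0 \<le> t" "t \<le> \<epsilon>" for t
  proof (cases "x + t *\<^sub>R d = 0")
    case False
    then obtain f where f: "f \<in> \<Phi>" "blinfun_apply f (x + t *\<^sub>R d) = norm (x + t *\<^sub>R d)"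
      using norming_attained by blast
    then have val: "norm (x + t *\<^sub>R d) = blinfun_apply f x + t * blinfun_apply f d"
      by (simp add: blinfun.add_right blinfun.scaleR_right)
    show ?thesis
    proof (cases "blinfun_apply f x < 1")
      case True
      with \<epsilon>(2)[of f t] f(1) t val show ?thesis by simp
    next
      case False
      then have "blinfun_apply f x = 1"
        using blinfun_le_norm[OF norm_le_one[OF f(1)], of x] x by simp
      then have "blinfun_apply f d \<le> 0"
        using d norming_mem_supp_functionals[OF f(1) x] by blast
      with t val \<open>blinfun_apply f x = 1\<close> show ?thesis
        by (simp add: mult_nonneg_nonpos)
    qed
  qed simp
  with \<epsilon>(1) that show ?thesis by blast
qed

lemma mem_rel_interior_supp_face:
  fixes x :: 'a
  assumes x: "norm x = 1"
  shows "x \<in> rel_interior (supp_face x)"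
  unfolding mem_rel_interior_ball
proof (intro conjI)
  show "x \<in> supp_face x"
    using x by (simp add: supp_face_def supp_functionals_def)
  obtain \<epsilon> where \<epsilon>: "\<epsilon> > 0" "\<And>f t. f \<in> {f \<in> \<Phi>. blinfun_apply f x < 1} \<Longrightarrow> 0 \<le> t \<Longrightarrow> t \<le> \<epsilon> \<Longrightarrow>
      t * 1 < 1 - blinfun_apply f x"
    using finite_uniform_step[where S = "{f \<in> \<Phi>. blinfun_apply f x < 1}"
        and a = "\<lambda>_. 1" and b = "\<lambda>f. 1 - blinfun_apply f x"] finite_\<Phi> by auto
  have "affine {p. \<forall>f\<in>supp_functionals x. blinfun_apply f p = 1}"
    unfolding affine_def by (auto simp: blinfun.add_right blinfun.scaleR_right distrib_left[symmetric])
  then have "affine hull (supp_face x) \<subseteq> {p. \<forall>f\<in>supp_functionals x. blinfun_apply f p = 1}"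
    by (intro hull_minimal) (auto simp: supp_face_def)
  moreover have "p \<in> supp_face x"
    if "p \<in> ball x \<epsilon>" "\<forall>f\<in>supp_functionals x. blinfun_apply f p = 1" for p
  proof -
    have "p \<noteq> 0"
      using that(2) supp_functionals_nonempty[OF x] by force
    then obtain f where f: "f \<in> \<Phi>" "blinfun_apply f p = norm p"
      using norming_attained by blast
    have "norm p \<le> 1"
    proof (cases "blinfun_apply f x < 1")
      case True
      have "blinfun_apply f (p - x) \<le> norm (p - x)" "norm (p - x) < \<epsilon>"
        using blinfun_le_norm[OF norm_le_one[OF f(1)]] that(1) by (auto simp: dist_norm norm_minus_commute)
      with \<epsilon>(1) \<epsilon>(2)[of f \<epsilon>] f True show ?thesis by (simp add: blinfun.diff_right)
    next
      case False
      then have "blinfun_apply f x = 1"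
        using blinfun_le_norm[OF norm_le_one[OF f(1)], of x] x by simp
      with that(2) f x norming_mem_supp_functionals show ?thesis by auto
    qed
    with that(2) show ?thesis by (simp add: supp_face_def)
  qed
  ultimately show "\<exists>e>0. ball x e \<inter> affine hull supp_face x \<subseteq> supp_face x"
    using \<epsilon>(1) by blast
qed

lemma annihilator_subset_span_face_differences:
  fixes x :: 'a
  assumes x: "norm x = 1" and F: "ball_face F" and xF: "x \<in> rel_interior F"
  shows "annihilator (supp_functionals x) \<subseteq> span {v - w | v w. v \<in> F \<and> w \<in> F}"
    (is "?A \<subseteq> span ?D")
proof
  fix d assume d: "d \<in> ?A"
  then have "- d \<in> ?A"
    by (simp add: subspace_neg subspace_annihilator)
  have "blinfun_apply f d \<le> 0" "blinfun_apply f (- d) \<le> 0" if "f \<in> supp_functionals x" for f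
    using d \<open>- d \<in> ?A\<close> that by (auto simp: annihilator_def)
  then obtain \<epsilon>1 \<epsilon>2 where \<epsilon>: "\<epsilon>1 > 0" "\<And>t. 0 \<le> t \<Longrightarrow> t \<le> \<epsilon>1 \<Longrightarrow> norm (x + t *\<^sub>R d) \<le> 1"
    "\<epsilon>2 > 0" "\<And>t. 0 \<le> t \<Longrightarrow> t \<le> \<epsilon>2 \<Longrightarrow> norm (x + t *\<^sub>R - d) \<le> 1"
    using step_stays_in_ball[OF x, of d] step_stays_in_ball[OF x, of "- d"] by metis
  define \<eta> where "\<eta> = min \<epsilon>1 \<epsilon>2"
  have \<eta>: "\<eta> > 0" "norm (x + \<eta> *\<^sub>R d) \<le> 1" "norm (x - \<eta> *\<^sub>R d) \<le> 1"
    using \<epsilon>(1,3) \<epsilon>(2)[of \<eta>] \<epsilon>(4)[of \<eta>] by (simp_all add: \<eta>_def)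
  obtain f0 where f0: "f0 \<in> supp_functionals x"
    using supp_functionals_nonempty[OF x] by blast
  have "blinfun_apply f0 (x + \<eta> *\<^sub>R d) = 1" "blinfun_apply f0 (x - \<eta> *\<^sub>R d) = 1"
    using f0 d by (simp_all add: annihilator_def supp_functionals_def blinfun.add_right
        blinfun.diff_right blinfun.scaleR_right)
  with \<eta>(2,3) supp_functional_le_norm[OF f0] have sphere:
    "x + \<eta> *\<^sub>R d \<in> sphere 0 1" "x - \<eta> *\<^sub>R d \<in> sphere 0 1"
    by (metis antisym mem_sphere_0)+
  have "(1 - 1/2) *\<^sub>R (x + \<eta> *\<^sub>R d) + (1/2) *\<^sub>R (x - \<eta> *\<^sub>R d) = x"
    by (simp add: algebra_simps flip: scaleR_2)
  then have mid: "(1 - 1/2) *\<^sub>R (x + \<eta> *\<^sub>R d) + (1/2 :: real) *\<^sub>R (x - \<eta> *\<^sub>R d) \<in> F"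
    using xF rel_interior_subset by auto
  have face_property: "\<And>x1 x2 t. x1 \<in> sphere 0 1 \<Longrightarrow> x2 \<in> sphere 0 1 \<Longrightarrow> 0 < t \<Longrightarrow> t < 1 \<Longrightarrow>
      (1 - t) *\<^sub>R x1 + t *\<^sub>R x2 \<in> F \<Longrightarrow> x1 \<in> F \<and> x2 \<in> F"
    using F unfolding ball_face_def by blast
  have "x + \<eta> *\<^sub>R d \<in> F \<and> x - \<eta> *\<^sub>R d \<in> F"
    using face_property[OF sphere _ _ mid] by simp
  then have "(x + \<eta> *\<^sub>R d) - (x - \<eta> *\<^sub>R d) \<in> span ?D"
    by (blast intro: span_base)
  then have "(2 * \<eta>) *\<^sub>R d \<in> span ?D"
    by (simp add: algebra_simps flip: scaleR_2)
  then have "(1 / (2 * \<eta>)) *\<^sub>R ((2 * \<eta>) *\<^sub>R d) \<in> span ?D"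
    by (rule span_mul)
  with \<eta>(1) show "d \<in> span ?D"
    by simp
qed

lemma span_face_differences_eq_annihilator:
  fixes x :: 'a
  assumes "norm x = 1" "ball_face F" "x \<in> rel_interior F"
  shows "span {v - w | v w. v \<in> F \<and> w \<in> F} = annihilator (supp_functionals x)"
proof
  show "span {v - w | v w. v \<in> F \<and> w \<in> F} \<subseteq> annihilator (supp_functionals x)"
    using supp_functional_vanishes_on_face[OF assms(2,3)]
    by (intro span_minimal subspace_annihilator) (auto simp: annihilator_def)
qed (rule annihilator_subset_span_face_differences[OF assms])

end

definition exposed_extreme_sets :: "'a::real_normed_vector set set" where
  "exposed_extreme_sets = {A. A \<subseteq> {e. e extreme_point_of cball 0 1} \<and>
     (\<exists>f::'a \<Rightarrow>\<^sub>L real. norm f \<le> 1 \<and> (\<forall>a\<in>A. blinfun_apply f a = 1))}"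

lemma finite_exposed_extreme_sets:
  assumes "finite {e::'a::real_normed_vector. e extreme_point_of cball 0 1}"
  shows "finite (exposed_extreme_sets :: 'a set set)"
proof -
  have "exposed_extreme_sets \<subseteq> Pow {e::'a. e extreme_point_of cball 0 1}"
    unfolding exposed_extreme_sets_def by blast
  with assms show ?thesis
    by (meson finite_Pow_iff finite_subset)
qed

lemma finite_norming_family_exists:
  assumes "finite (exposed_extreme_sets :: 'a::real_normed_vector set set)"
    and "\<And>y::'a. norm y = 1 \<Longrightarrow> \<exists>A\<in>exposed_extreme_sets. y \<in> convex hull A"
  shows "\<exists>\<Phi> :: ('a \<Rightarrow>\<^sub>L real) set. finite_norming_family \<Phi>"
proof -
  have "\<forall>A\<in>exposed_extreme_sets. \<exists>f::'a \<Rightarrow>\<^sub>L real. norm f \<le> 1 \<and> (\<forall>a\<in>A. blinfun_apply f a = 1)"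
    by (simp add: exposed_extreme_sets_def)
  then have "\<exists>F :: 'a set \<Rightarrow> ('a \<Rightarrow>\<^sub>L real). \<forall>A\<in>exposed_extreme_sets.
      norm (F A) \<le> 1 \<and> (\<forall>a\<in>A. blinfun_apply (F A) a = 1)"
    by (rule bchoice)
  then obtain F :: "'a set \<Rightarrow> ('a \<Rightarrow>\<^sub>L real)" where
    F: "\<And>A. A \<in> exposed_extreme_sets \<Longrightarrow> norm (F A) \<le> 1 \<and> (\<forall>a\<in>A. blinfun_apply (F A) a = 1)"
    by blast
  have "\<exists>f\<in>F ` exposed_extreme_sets. blinfun_apply f y = 1" if y: "norm y = 1" for y
  proof -
    obtain A where "A \<in> exposed_extreme_sets" "y \<in> convex hull A"
      using assms(2)[OF y] by blast
    then show ?thesis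
      using F linear_eq_one_on_convex_hull[OF linear_blinfun_apply] by blast
  qed
  then have "finite_norming_family (F ` exposed_extreme_sets)"
    using F assms(1) by unfold_locales auto
  then show ?thesis ..
qed


section \<open>Finite-dimensional normed spaces\<close>

locale finite_basis_space =
  fixes Bs :: "'a::real_normed_vector set"
  assumes independent_Bs: "independent Bs" and span_Bs: "span Bs = UNIV" and finite_Bs: "finite Bs"
begin

sublocale fd: finite_dimensional_vector_space "scaleR :: real => 'a => 'a" Bs
  rewrites "module.dependent (*\<^sub>R) = dependent"
    and "module.representation (*\<^sub>R) = representation"
    and "module.subspace (*\<^sub>R) = subspace"
    and "module.span (*\<^sub>R) = span"
    and "vector_space.extend_basis (*\<^sub>R) = extend_basis"
    and "vector_space.dim (*\<^sub>R) = dim"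
    and "Vector_Spaces.linear (*\<^sub>R) (*\<^sub>R) = linear"
    and "Vector_Spaces.linear (*) (*\<^sub>R) = linear"
proof -
  show "finite_dimensional_vector_space (*\<^sub>R) Bs"
    by unfold_locales
      (use independent_Bs span_Bs finite_Bs in \<open>auto simp: dependent_raw_def span_raw_def\<close>)
qed (auto simp add: dependent_raw_def representation_raw_def
      subspace_raw_def span_raw_def extend_basis_raw_def dim_raw_def linear_def
      real_scaleR_def[abs_def])

definition coord :: "'a \<Rightarrow> 'a \<Rightarrow> real" where
  "coord b v = representation Bs v b"

definition comb :: "('a \<Rightarrow> real) \<Rightarrow> 'a" where
  "comb t = (\<Sum>b\<in>Bs. t b *\<^sub>R b)"

lemma coord_add: "coord b (u + v) = coord b u + coord b v"
  unfolding coord_def using real_vector.representation_add[OF independent_Bs, of v u] span_Bs by simp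

lemma coord_scaleR: "coord b (r *\<^sub>R v) = r * coord b v"
  unfolding coord_def using real_vector.representation_scale[OF independent_Bs, of v r] span_Bs by simp

lemma coord_diff: "coord b (u - v) = coord b u - coord b v"
  unfolding coord_def using real_vector.representation_diff[OF independent_Bs, of v u] span_Bs by simp

lemma coord_zero: "coord b 0 = 0"
  unfolding coord_def by (simp add: real_vector.representation_zero)

lemma coord_not_in_basis: "b \<notin> Bs \<Longrightarrow> coord b v = 0"
  unfolding coord_def using real_vector.representation_ne_zero by blast

lemma comb_coord: "comb (\<lambda>b. coord b v) = v"
  unfolding coord_def comb_def
  using real_vector.sum_representation_eq[OF independent_Bs, of v Bs] span_Bs finite_Bs by simp

lemma coord_comb: "b \<in> Bs \<Longrightarrow> coord b (comb t) = t b"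
proof -
  assume "b \<in> Bs"
  have "(\<Sum>b\<in>Bs. (t b - coord b (comb t)) *\<^sub>R b) = 0"
    using comb_coord[of "comb t"] by (simp add: comb_def scaleR_diff_left sum_subtractf)
  then show ?thesis
    using independent_Bs finite_Bs \<open>b \<in> Bs\<close> unfolding fd.independent_explicit by force
qed

lemma continuous_map_comb: "continuous_map (product_topology (\<lambda>_. euclideanreal) Bs) euclidean comb"
proof -
  have "continuous_map (product_topology (\<lambda>_. euclideanreal) Bs) euclidean (\<lambda>t. t b *\<^sub>R b)"
    if "b \<in> Bs" for b
  proof -
    have "continuous_map euclideanreal euclidean (\<lambda>r. r *\<^sub>R b)"
      by (simp add: continuous_on_scaleR)
    from continuous_map_compose[OF continuous_map_product_projection[OF that] this]
    show ?thesis by (simp add: o_def)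
  qed
  then show ?thesis
    unfolding comb_def by (intro continuous_map_sum finite_Bs)
qed

text \<open>The norm is bounded below on the compact set of coordinate vectors of 1-norm one.\<close>
lemma norm_comb_bounded_below: "\<exists>m>0. \<forall>t. (\<Sum>b\<in>Bs. \<bar>t b\<bar>) = 1 \<longrightarrow> m \<le> norm (comb t)"
proof -
  let ?X = "product_topology (\<lambda>_. euclideanreal) Bs"
  define g where "g t = (\<Sum>b\<in>Bs. \<bar>t b\<bar>)" for t :: "'a \<Rightarrow> real"
  define K where "K = {t \<in> topspace ?X. g t \<in> {1}} \<inter> PiE Bs (\<lambda>_. {-1..1})"
  have cont_g: "continuous_map ?X euclideanreal g"
    unfolding g_def
    by (intro continuous_map_sum continuous_map_real_abs finite_Bs continuous_map_product_projection)
  have "compactin ?X K"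
    unfolding K_def
    by (intro closed_Int_compactin closedin_continuous_map_preimage[OF cont_g])
      (simp_all add: compactin_PiE)
  then have compact_img: "compact (comb ` K)"
    using image_compactin[OF _ continuous_map_comb] by simp
  have nonzero: "p \<noteq> 0" if "p \<in> comb ` K" for p
  proof
    assume "p = 0"
    with that obtain t where t: "t \<in> K" "comb t = 0" by auto
    then have "t b = 0" if "b \<in> Bs" for b
      using coord_comb[OF that, of t] by (simp add: coord_zero)
    then have "g t = 0" by (simp add: g_def)
    with t show False by (simp add: K_def)
  qed
  obtain m where m: "m > 0" "\<And>p. p \<in> comb ` K \<Longrightarrow> m \<le> norm p"
  proof (cases "comb ` K = {}")
    case False
    then obtain p0 where "p0 \<in> comb ` K" "\<And>p. p \<in> comb ` K \<Longrightarrow> norm p0 \<le> norm p"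
      using continuous_attains_inf[OF compact_img False continuous_on_norm_id] by blast
    with that[of "norm p0"] nonzero show ?thesis by auto
  qed (use that[of 1] in auto)
  have "m \<le> norm (comb t)" if t: "(\<Sum>b\<in>Bs. \<bar>t b\<bar>) = 1" for t
  proof -
    have "\<bar>t b\<bar> \<le> 1" if "b \<in> Bs" for b
      using t member_le_sum[OF that, of "\<lambda>b. \<bar>t b\<bar>"] finite_Bs by simp
    with t have "restrict t Bs \<in> K"
      unfolding K_def g_def by (force simp: abs_le_iff)
    moreover have "comb (restrict t Bs) = comb t"
      by (simp add: comb_def)
    ultimately show ?thesis
      using m(2) by force
  qed
  with m(1) show ?thesis by blast
qed

lemma coord_sum_le_norm: "\<exists>m>0. \<forall>v. m * (\<Sum>b\<in>Bs. \<bar>coord b v\<bar>) \<le> norm v"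
proof -
  obtain m where m: "m > 0" "\<And>t. (\<Sum>b\<in>Bs. \<bar>t b\<bar>) = 1 \<Longrightarrow> m \<le> norm (comb t)"
    using norm_comb_bounded_below by blast
  have "m * (\<Sum>b\<in>Bs. \<bar>coord b v\<bar>) \<le> norm v" for v
  proof -
    define s where "s = (\<Sum>b\<in>Bs. \<bar>coord b v\<bar>)"
    show ?thesis
    proof (cases "s = 0")
      case False
      then have "s > 0"
        unfolding s_def by (simp add: sum_nonneg order_le_neq_trans)
      then have "(\<Sum>b\<in>Bs. \<bar>coord b v / s\<bar>) = 1"
        by (simp add: abs_div s_def flip: sum_divide_distrib)
      moreover have "comb (\<lambda>b. coord b v / s) = (1/s) *\<^sub>R comb (\<lambda>b. coord b v)"
        unfolding comb_def scaleR_sum_right by simp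
      ultimately have "m \<le> norm ((1/s) *\<^sub>R v)"
        using m(2) comb_coord by metis
      then show ?thesis
        using \<open>s > 0\<close> by (simp add: s_def field_simps)
    qed (simp add: s_def)
  qed
  with m(1) show ?thesis by blast
qed

lemma abs_coord_le: "\<exists>M>0. \<forall>b v. \<bar>coord b v\<bar> \<le> M * norm v"
proof -
  obtain m where m: "m > 0" "\<And>v. m * (\<Sum>b\<in>Bs. \<bar>coord b v\<bar>) \<le> norm v"
    using coord_sum_le_norm by blast
  have "\<bar>coord b v\<bar> \<le> (1/m) * norm v" for b v
  proof (cases "b \<in> Bs")
    case True
    then have "\<bar>coord b v\<bar> \<le> (\<Sum>b\<in>Bs. \<bar>coord b v\<bar>)"
      using finite_Bs by (intro member_le_sum) auto
    then have "m * \<bar>coord b v\<bar> \<le> norm v"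
      using m by (meson dual_order.trans mult_le_cancel_left_pos)
    then show ?thesis using m(1) by (simp add: field_simps)
  qed (use m(1) in \<open>simp add: coord_not_in_basis\<close>)
  then show ?thesis using m(1) by (intro exI[of _ "1/m"]) auto
qed

lemma bounded_linear_coord: "bounded_linear (coord b)"
proof -
  obtain M where "\<And>b v. \<bar>coord b v\<bar> \<le> M * norm v" using abs_coord_le by blast
  then show ?thesis
    by (intro bounded_linear_intro[of _ M]) (auto simp: coord_add coord_scaleR mult.commute)
qed

lemma linear_imp_bounded_linear:
  fixes f :: "'a \<Rightarrow> 'b::real_normed_vector"
  assumes "linear f"
  shows "bounded_linear f"
proof -
  obtain M where M: "\<And>b v. \<bar>coord b v\<bar> \<le> M * norm v" using abs_coord_le by blast
  have "norm (f v) \<le> norm v * (M * (\<Sum>b\<in>Bs. norm (f b)))" for v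
  proof -
    have "f v = (\<Sum>b\<in>Bs. coord b v *\<^sub>R f b)"
      using comb_coord[of v] unfolding comb_def
      by (metis (no_types, lifting) assms linear_scale linear_sum sum.cong)
    then have "norm (f v) \<le> (\<Sum>b\<in>Bs. \<bar>coord b v\<bar> * norm (f b))"
      by (metis (no_types, lifting) norm_scaleR norm_sum sum.cong)
    also have "\<dots> \<le> (\<Sum>b\<in>Bs. (M * norm v) * norm (f b))"
      using M by (intro sum_mono mult_right_mono) auto
    finally show ?thesis by (simp add: sum_distrib_left mult_ac)
  qed
  with assms show ?thesis
    by (intro bounded_linear_intro[of _ "M * (\<Sum>b\<in>Bs. norm (f b))"])
      (auto simp: linear_add linear_scale)
qed

lemma bounded_closed_imp_compact:
  fixes S :: "'a set"
  assumes "bounded S" "closed S"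
  shows "compact S"
proof -
  obtain r where r: "\<And>x. x \<in> S \<Longrightarrow> norm x \<le> r" using assms(1) bounded_iff by blast
  obtain M where M: "M > 0" "\<And>b v. \<bar>coord b v\<bar> \<le> M * norm v" using abs_coord_le by blast
  define K where "K = PiE Bs (\<lambda>_. {-(M*r)..M*r})"
  have "compact (comb ` K)"
    using image_compactin[OF _ continuous_map_comb, of K] unfolding K_def compactin_PiE by simp
  moreover have "S \<subseteq> comb ` K"
  proof
    fix v assume "v \<in> S"
    then have "\<bar>coord b v\<bar> \<le> M * r" for b
      using M(2)[of b v] mult_left_mono[OF r, of v M] M(1) by linarith
    then have "restrict (\<lambda>b. coord b v) Bs \<in> K"
      unfolding K_def by (force simp: abs_le_iff)
    moreover have "comb (restrict (\<lambda>b. coord b v) Bs) = v"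
      using comb_coord[of v] unfolding comb_def by simp
    ultimately show "v \<in> comb ` K" by force
  qed
  ultimately show ?thesis
    using compact_Int_closed[OF _ assms(2)] by (metis inf.absorb_iff2)
qed

lemma compact_unit_cball: "compact (cball (0::'a) 1)"
  by (rule bounded_closed_imp_compact) auto

text \<open>An auxiliary Euclidean structure built from coordinates. Its strict convexity supplies
  nearest points and extreme points; it is unrelated to the norm of the space.\<close>
definition cinner :: "'a \<Rightarrow> 'a \<Rightarrow> real" where
  "cinner u v = (\<Sum>b\<in>Bs. coord b u * coord b v)"

abbreviation cnorm2 :: "'a \<Rightarrow> real" where
  "cnorm2 v \<equiv> cinner v v"

lemma cinner_add_right: "cinner u (v + w) = cinner u v + cinner u w"
  unfolding cinner_def by (simp add: coord_add distrib_left sum.distrib)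

lemma cinner_diff_right: "cinner u (v - w) = cinner u v - cinner u w"
  unfolding cinner_def by (simp add: coord_diff right_diff_distrib sum_subtractf)

lemma cinner_scaleR_right: "cinner u (r *\<^sub>R v) = r * cinner u v"
  unfolding cinner_def by (simp add: coord_scaleR sum_distrib_left mult_ac)

lemma cnorm2_scaleR: "cnorm2 (r *\<^sub>R v) = r\<^sup>2 * cnorm2 v"
  unfolding cinner_def by (simp add: coord_scaleR sum_distrib_left power2_eq_square mult_ac)

lemma cnorm2_nonneg: "cnorm2 v \<ge> 0"
  unfolding cinner_def by (simp add: sum_nonneg)

lemma cnorm2_pos: "v \<noteq> 0 \<Longrightarrow> cnorm2 v > 0"
proof -
  assume "v \<noteq> 0"
  have "cnorm2 v \<noteq> 0"
  proof
    assume "cnorm2 v = 0"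
    then have "\<forall>b\<in>Bs. coord b v * coord b v = 0"
      unfolding cinner_def using finite_Bs by (subst (asm) sum_nonneg_eq_0_iff) auto
    then have "comb (\<lambda>b. coord b v) = 0" by (simp add: comb_def)
    with \<open>v \<noteq> 0\<close> show False by (simp add: comb_coord)
  qed
  with cnorm2_nonneg show ?thesis by (simp add: order_le_neq_trans)
qed

lemma cnorm2_diff_scaleR: "cnorm2 (a - t *\<^sub>R d) = cnorm2 a - 2 * t * cinner a d + t\<^sup>2 * cnorm2 d"
proof -
  have "cnorm2 (a - t *\<^sub>R d) = (\<Sum>b\<in>Bs. coord b a * coord b a - 2 * t * (coord b a * coord b d)
      + t\<^sup>2 * (coord b d * coord b d))"
    unfolding cinner_def
    by (intro sum.cong) (auto simp: coord_diff coord_scaleR power2_eq_square algebra_simps)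
  then show ?thesis by (simp add: cinner_def sum.distrib sum_subtractf sum_distrib_left)
qed

lemma cnorm2_convex_comb:
  "(1 - u) * cnorm2 a + u * cnorm2 b - cnorm2 ((1 - u) *\<^sub>R a + u *\<^sub>R b) = u * (1 - u) * cnorm2 (a - b)"
proof -
  have "cnorm2 (a - 1 *\<^sub>R (a - b)) = cnorm2 a - 2 * 1 * cinner a (a - b) + 1\<^sup>2 * cnorm2 (a - b)"
    by (rule cnorm2_diff_scaleR)
  then have b: "cnorm2 b = cnorm2 a - 2 * cinner a (a - b) + cnorm2 (a - b)"
    by simp
  have "(1 - u) *\<^sub>R a + u *\<^sub>R b = a - u *\<^sub>R (a - b)"
    by (simp add: algebra_simps)
  then have ab: "cnorm2 ((1 - u) *\<^sub>R a + u *\<^sub>R b) = cnorm2 a - 2 * u * cinner a (a - b) + u\<^sup>2 * cnorm2 (a - b)"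
    by (simp only: cnorm2_diff_scaleR)
  show ?thesis
    unfolding ab b by (simp add: power2_eq_square algebra_simps)
qed

lemma norm_le_cnorm2: "\<exists>K\<ge>0. \<forall>v. norm v \<le> K * sqrt (cnorm2 v)"
proof (intro exI[of _ "\<Sum>b\<in>Bs. norm b"] conjI allI)
  fix v
  have coord_le: "\<bar>coord b v\<bar> \<le> sqrt (cnorm2 v)" if "b \<in> Bs" for b
    unfolding cinner_def using that finite_Bs
    by (intro real_le_rsqrt) (auto simp: power2_eq_square intro: member_le_sum)
  have "norm v = norm (\<Sum>b\<in>Bs. coord b v *\<^sub>R b)"
    using comb_coord[of v] by (simp add: comb_def)
  also have "\<dots> \<le> (\<Sum>b\<in>Bs. \<bar>coord b v\<bar> * norm b)"
    by (metis (no_types, lifting) norm_scaleR norm_sum sum.cong)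
  also have "\<dots> \<le> (\<Sum>b\<in>Bs. sqrt (cnorm2 v) * norm b)"
    by (intro sum_mono mult_right_mono coord_le) auto
  finally show "norm v \<le> (\<Sum>b\<in>Bs. norm b) * sqrt (cnorm2 v)"
    by (simp add: sum_distrib_right mult.commute)
qed (simp add: sum_nonneg)

lemma continuous_on_cinner [continuous_intros]:
  "continuous_on S f \<Longrightarrow> continuous_on S g \<Longrightarrow> continuous_on S (\<lambda>w. cinner (f w) (g w))"
  unfolding cinner_def
  by (intro continuous_on_sum continuous_on_mult bounded_linear.continuous_on[OF bounded_linear_coord])

lemma nearest_point_cinner:
  fixes C :: "'a set"
  assumes "compact C" "convex C" "C \<noteq> {}" "y \<notin> C"
  obtains z where "z \<in> C" "\<And>w. w \<in> C \<Longrightarrow> cnorm2 (y - z) \<le> cnorm2 (y - w)"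
    "\<And>w. w \<in> C \<Longrightarrow> cinner (y - z) w \<le> cinner (y - z) z" "cinner (y - z) z < cinner (y - z) y"
proof -
  have "continuous_on C (\<lambda>w. cnorm2 (y - w))" by (intro continuous_intros)
  then obtain z where z: "z \<in> C" "\<And>w. w \<in> C \<Longrightarrow> cnorm2 (y - z) \<le> cnorm2 (y - w)"
    using continuous_attains_inf[OF assms(1,3)] by blast
  have "cinner (y - z) (w - z) \<le> 0" if "w \<in> C" for w
  proof (rule ccontr)
    define a where "a = y - z"
    define d where "d = w - z"
    assume "\<not> cinner (y - z) (w - z) \<le> 0"
    then have pos: "cinner a d > 0" by (simp add: a_def d_def)
    have step: "cnorm2 a \<le> cnorm2 a - 2 * t * cinner a d + t\<^sup>2 * cnorm2 d" if "0 < t" "t \<le> 1" for t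
    proof -
      have "(1 - t) *\<^sub>R z + t *\<^sub>R w \<in> C"
        using assms(2) z(1) \<open>w \<in> C\<close> that unfolding convex_alt by auto
      then have "cnorm2 a \<le> cnorm2 (y - ((1 - t) *\<^sub>R z + t *\<^sub>R w))"
        unfolding a_def by (rule z(2))
      also have "y - ((1 - t) *\<^sub>R z + t *\<^sub>R w) = a - t *\<^sub>R d"
        by (simp add: a_def d_def algebra_simps)
      finally show ?thesis
        by (simp add: cnorm2_diff_scaleR)
    qed
    from step[of 1] pos have "cnorm2 d > 0" by simp
    define t where "t = min 1 (cinner a d / cnorm2 d)"
    have t: "0 < t" "t \<le> 1" "t * cnorm2 d \<le> cinner a d"
      using pos \<open>cnorm2 d > 0\<close> by (auto simp: t_def min_def field_simps)
    then have "t * (t * cnorm2 d) \<le> t * cinner a d" "t * cinner a d > 0"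
      using pos by (simp_all add: mult_left_mono)
    with step[OF t(1,2)] show False by (simp add: power2_eq_square)
  qed
  moreover have "cnorm2 (y - z) > 0"
    using z(1) assms(4) by (intro cnorm2_pos) auto
  ultimately show ?thesis
    using that[OF z] by (simp add: cinner_diff_right)
qed

text \<open>A maximiser of the strictly convex function \<open>cnorm2\<close> is an extreme point.\<close>
lemma extreme_point_exists:
  fixes K :: "'a set"
  assumes "compact K" "K \<noteq> {}"
  shows "\<exists>e. e extreme_point_of K"
proof -
  have "continuous_on K cnorm2" by (intro continuous_intros)
  then obtain e where e: "e \<in> K" "\<And>w. w \<in> K \<Longrightarrow> cnorm2 w \<le> cnorm2 e"
    using continuous_attains_sup[OF assms] by blast
  have "e \<notin> open_segment a b" if "a \<in> K" "b \<in> K" for a b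
  proof
    assume "e \<in> open_segment a b"
    then obtain u where u: "a \<noteq> b" "0 < u" "u < 1" "e = (1 - u) *\<^sub>R a + u *\<^sub>R b"
      by (auto simp: in_segment)
    have "u * (1 - u) * cnorm2 (a - b) > 0"
      using u cnorm2_pos[of "a - b"] by simp
    moreover have "(1 - u) * cnorm2 a \<le> (1 - u) * cnorm2 e" "u * cnorm2 b \<le> u * cnorm2 e"
      using e that u by (intro mult_left_mono; simp)+
    ultimately show False
      using cnorm2_convex_comb[of u a b] u(4) by (simp add: algebra_simps)
  qed
  with e(1) show ?thesis unfolding extreme_point_of_def by blast
qed

lemma extreme_point_maximizing_linear:
  fixes K :: "'a set" and h :: "'a \<Rightarrow> real"
  assumes "compact K" "convex K" "K \<noteq> {}" "linear h"
  obtains e where "e extreme_point_of K" "\<And>w. w \<in> K \<Longrightarrow> h w \<le> h e"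
proof -
  have cont: "continuous_on K h"
    using linear_imp_bounded_linear[OF assms(4)] by (simp add: linear_continuous_on)
  then obtain m where m: "m \<in> K" "\<And>w. w \<in> K \<Longrightarrow> h w \<le> h m"
    using continuous_attains_sup[OF assms(1,3)] by blast
  define G where "G = {w \<in> K. h w = h m}"
  have "G = K \<inter> h -` {h m}"
    unfolding G_def by auto
  moreover have "closed G"
    unfolding G_def by (rule continuous_closed_preimage_constant[OF cont compact_imp_closed[OF assms(1)]])
  ultimately have "compact G" "convex G"
    using compact_Int_closed[OF assms(1), of G] convex_Int[OF assms(2) convex_linear_vimage[OF assms(4)]]
    by (simp_all add: Int_absorb1 G_def)
  moreover have "G \<noteq> {}"
    using m(1) by (auto simp: G_def)
  ultimately obtain e where e: "e extreme_point_of G"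
    using extreme_point_exists[of G] by blast
  then have eG: "e \<in> K" "h e = h m"
    by (auto simp: G_def extreme_point_of_def)
  have "e \<notin> open_segment a b" if ab: "a \<in> K" "b \<in> K" for a b
  proof
    assume "e \<in> open_segment a b"
    then obtain u where u: "0 < u" "u < 1" "e = (1 - u) *\<^sub>R a + u *\<^sub>R b"
      by (auto simp: in_segment)
    then have "(1 - u) * h a + u * h b = h m"
      using eG(2) assms(4) by (simp add: linear_add linear_scale)
    then have "h a = h m" "h b = h m"
      using convex_comb_eq_upper_bound[OF m(2)[OF ab(1)] m(2)[OF ab(2)] u(1,2)] by simp_all
    with ab have "a \<in> G" "b \<in> G"
      by (simp_all add: G_def)
    with e \<open>e \<in> open_segment a b\<close> show False
      unfolding extreme_point_of_def by blast
  qed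
  then have "e extreme_point_of K"
    using eG(1) unfolding extreme_point_of_def by blast
  then show ?thesis
    by (rule that) (use m(2) eG(2) in auto)
qed

lemma cball_eq_convex_hull_extreme_points:
  assumes "finite {e. e extreme_point_of cball (0::'a) 1}"
  shows "cball (0::'a) 1 = convex hull {e. e extreme_point_of cball 0 1}"
proof -
  define E where "E = {e. e extreme_point_of cball (0::'a) 1}"
  define C where "C = convex hull E"
  have "C \<subseteq> cball 0 1"
    unfolding C_def E_def by (intro hull_minimal) (auto simp: extreme_point_of_def)
  moreover have "cball 0 1 \<subseteq> C"
  proof
    fix y :: 'a assume y: "y \<in> cball 0 1"
    show "y \<in> C"
    proof (rule ccontr)
      assume "y \<notin> C"
      have "compact C"
        unfolding C_def E_def by (rule finite_imp_compact_convex_hull[OF assms])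
      moreover have "C \<noteq> {}"
        using extreme_point_exists[OF compact_unit_cball] hull_subset
        unfolding C_def E_def by fastforce
      ultimately obtain z where z: "\<And>w. w \<in> C \<Longrightarrow> cinner (y - z) w \<le> cinner (y - z) z"
          "cinner (y - z) z < cinner (y - z) y"
        using nearest_point_cinner[of C y] \<open>y \<notin> C\<close> unfolding C_def by blast
      have cball_nonempty: "cball (0::'a) 1 \<noteq> {}"
        by simp
      have lin: "linear (cinner (y - z))"
        by (rule linearI) (simp_all add: cinner_add_right cinner_scaleR_right)
      obtain e where e: "e extreme_point_of cball 0 1"
          "\<And>w. w \<in> cball 0 1 \<Longrightarrow> cinner (y - z) w \<le> cinner (y - z) e"
        using extreme_point_maximizing_linear[OF compact_unit_cball convex_cball cball_nonempty lin]
        by blast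
      then have "e \<in> C"
        unfolding C_def E_def by (simp add: hull_inc)
      with z e(2)[OF y] show False
        by (meson not_le order_less_le_trans)
    qed
  qed
  ultimately show ?thesis
    unfolding C_def E_def by blast
qed

lemma exposing_functional:
  fixes a z :: 'a
  assumes "\<And>w. norm w \<le> 1 \<Longrightarrow> cinner a w \<le> cinner a z" "cinner a z > 0"
  obtains g :: "'a \<Rightarrow>\<^sub>L real" where "norm g \<le> 1" "blinfun_apply g z = 1"
proof -
  define g where "g w = cinner a w / cinner a z" for w
  have "linear g"
    by (rule linearI) (simp_all add: g_def cinner_add_right cinner_scaleR_right add_divide_distrib)
  moreover have "g w \<le> 1" if "norm w \<le> 1" for w
    using assms that by (simp add: g_def)
  ultimately obtain gb where "blinfun_apply gb = g" "norm gb \<le> 1"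
    by (rule blinfun_of_le_one_on_cball)
  moreover have "g z = 1"
    using assms(2) by (simp add: g_def)
  ultimately show ?thesis
    using that by simp
qed

text \<open>Project \<open>(1 + \<delta>) y\<close> onto the ball in the coordinate metric: the projection \<open>z\<close> is
  close to \<open>y\<close>, and the separating direction exposes \<open>z\<close>.\<close>
lemma supporting_functional_nearby:
  fixes y :: 'a
  assumes "norm y = 1" "r > 0"
  obtains z and g :: "'a \<Rightarrow>\<^sub>L real" where "norm (z - y) < r" "norm z \<le> 1" "norm g \<le> 1" "blinfun_apply g z = 1"
proof -
  obtain K where K: "K \<ge> 0" "\<And>v. norm v \<le> K * sqrt (cnorm2 v)"
    using norm_le_cnorm2 by blast
  define c where "c = K * sqrt (cnorm2 y) + 1"
  define \<delta> where "\<delta> = r / (2 * c)"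
  have "c > 0"
    using K(1) cnorm2_nonneg by (simp add: c_def add_nonneg_pos)
  then have \<delta>: "\<delta> > 0" "\<delta> * (K * sqrt (cnorm2 y) + 1) < r"
    using assms(2) by (simp_all add: \<delta>_def flip: c_def)
  define y' where "y' = (1 + \<delta>) *\<^sub>R y"
  have "y' \<notin> cball 0 1"
    using assms(1) \<delta>(1) by (simp add: y'_def)
  then obtain z where z: "z \<in> cball 0 1" "\<And>w. w \<in> cball 0 1 \<Longrightarrow> cnorm2 (y' - z) \<le> cnorm2 (y' - w)"
      "\<And>w. w \<in> cball 0 1 \<Longrightarrow> cinner (y' - z) w \<le> cinner (y' - z) z"
      "cinner (y' - z) z < cinner (y' - z) y'"
    using nearest_point_cinner[OF compact_unit_cball convex_cball] by auto
  have y: "y \<in> cball 0 1" "y' - y = \<delta> *\<^sub>R y"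
    using assms(1) by (simp_all add: y'_def algebra_simps)
  have "norm (z - y) \<le> norm (y' - y) + norm (y' - z)"
    using norm_triangle_ineq4[of "y' - y" "y' - z"] by simp
  also have "\<dots> \<le> \<delta> + K * sqrt (cnorm2 (y' - y))"
  proof -
    have "norm (y' - z) \<le> K * sqrt (cnorm2 (y' - y))"
      using K(2)[of "y' - z"] mult_left_mono[OF real_sqrt_le_mono[OF z(2)[OF y(1)]] K(1)] by linarith
    then show ?thesis
      using \<delta>(1) assms(1) by (simp add: y(2))
  qed
  also have "\<dots> = \<delta> * (K * sqrt (cnorm2 y) + 1)"
    using \<delta>(1) by (simp add: y(2) cnorm2_scaleR real_sqrt_mult algebra_simps)
  finally have "norm (z - y) \<le> \<delta> * (K * sqrt (cnorm2 y) + 1)" .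
  with \<delta>(2) have close: "norm (z - y) < r"
    by simp
  define M where "M = cinner (y' - z) z"
  have "cinner (y' - z) y' = (1 + \<delta>) * cinner (y' - z) y"
    by (simp only: y'_def cinner_scaleR_right)
  then have "cinner (y' - z) y' = cinner (y' - z) y + \<delta> * cinner (y' - z) y"
    by (simp add: algebra_simps)
  with z(3)[OF y(1)] z(4) have "\<delta> * cinner (y' - z) y > 0"
    by linarith
  with \<delta>(1) z(3)[OF y(1)] have "M > 0"
    unfolding M_def by (simp add: zero_less_mult_iff)
  moreover have "cinner (y' - z) w \<le> M" if "norm w \<le> 1" for w
    using z(3) that unfolding M_def by simp
  ultimately obtain g :: "'a \<Rightarrow>\<^sub>L real" where "norm g \<le> 1" "blinfun_apply g z = 1"
    using exposing_functional[of "y' - z" z] unfolding M_def by blast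
  with that[of z g] close z(1) show ?thesis
    by simp
qed

lemma sphere_subset_exposed_hulls:
  fixes y :: 'a
  assumes "finite {e. e extreme_point_of cball (0::'a) 1}" "norm y = 1"
  shows "\<exists>A\<in>exposed_extreme_sets. y \<in> convex hull A"
proof -
  define E where "E = {e. e extreme_point_of cball (0::'a) 1}"
  have "finite E"
    using assms by (simp add: E_def)
  have "closed (convex hull A)" if "A \<in> exposed_extreme_sets" for A :: "'a set"
  proof -
    have "finite A"
      using that \<open>finite E\<close> by (auto simp: exposed_extreme_sets_def E_def intro: finite_subset)
    then show ?thesis
      by (simp add: compact_imp_closed finite_imp_compact_convex_hull)
  qed
  with finite_exposed_extreme_sets[OF assms(1)]
  have closed: "closed (\<Union>A\<in>exposed_extreme_sets. convex hull A :: 'a set)"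
    by (intro closed_UN) simp_all
  have "\<forall>r>0. \<exists>z\<in>(\<Union>A\<in>exposed_extreme_sets. convex hull A). dist z y < r"
  proof (intro allI impI)
    fix r :: real assume "r > 0"
    obtain z and g :: "'a \<Rightarrow>\<^sub>L real" where zg: "norm (z - y) < r" "norm z \<le> 1" "norm g \<le> 1"
        "blinfun_apply g z = 1"
      using supporting_functional_nearby[OF assms(2) \<open>r > 0\<close>] by blast
    have "z \<in> convex hull E"
      using zg(2) cball_eq_convex_hull_extreme_points[OF assms(1)] by (auto simp: E_def)
    moreover have "blinfun_apply g e \<le> 1" if "e \<in> E" for e
      using that blinfun_le_norm[OF zg(3), of e] by (auto simp: E_def extreme_point_of_def)
    ultimately have "z \<in> convex hull {e \<in> E. blinfun_apply g e = 1}"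
      using convex_hull_level_set[OF \<open>finite E\<close> linear_blinfun_apply] zg(4) by blast
    moreover have "{e \<in> E. blinfun_apply g e = 1} \<in> exposed_extreme_sets"
      using zg(3) unfolding exposed_extreme_sets_def E_def by (auto intro!: exI[of _ g])
    ultimately show "\<exists>z\<in>(\<Union>A\<in>exposed_extreme_sets. convex hull A). dist z y < r"
      using zg(1) unfolding dist_norm by blast
  qed
  then have "y \<in> (\<Union>A\<in>exposed_extreme_sets. convex hull A)"
    using closed_approachable[OF closed] by simp
  then show ?thesis
    by blast
qed

lemma blinfun_eq_sum_representation:
  assumes D: "independent D" "span D = UNIV" "finite D"
  shows "g = (\<Sum>b\<in>D. blinfun_apply g b *\<^sub>R Blinfun (\<lambda>v::'a. representation D v b))"
proof (rule blinfun_eqI)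
  fix v :: 'a
  have "linear (\<lambda>v::'a. representation D v b)" for b
    by (rule linearI) (simp_all add: real_vector.representation_add[OF D(1)]
        real_vector.representation_scale[OF D(1)] D(2))
  then have bl: "bounded_linear (\<lambda>v::'a. representation D v b)" for b
    by (rule linear_imp_bounded_linear)
  have "blinfun_apply g v = blinfun_apply g (\<Sum>b\<in>D. representation D v b *\<^sub>R b)"
    using real_vector.sum_representation_eq[OF D(1), of v D] D by simp
  also have "\<dots> = (\<Sum>b\<in>D. representation D v b * blinfun_apply g b)"
    by (simp add: linear_sum[OF linear_blinfun_apply] linear_scale[OF linear_blinfun_apply])
  finally show "blinfun_apply g v
      = blinfun_apply (\<Sum>b\<in>D. blinfun_apply g b *\<^sub>R Blinfun (\<lambda>v. representation D v b)) v"
    by (simp add: blinfun.sum_left blinfun.scaleR_left bounded_linear_Blinfun_apply[OF bl] mult.commute)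
qed

lemma independent_functionals_finite:
  assumes "independent (G :: ('a \<Rightarrow>\<^sub>L real) set)"
  shows "finite G"
proof -
  let ?S = "(\<lambda>b. Blinfun (\<lambda>v::'a. representation Bs v b)) ` Bs"
  have "G \<subseteq> span ?S"
  proof
    fix g assume "g \<in> G"
    have "g = (\<Sum>b\<in>Bs. blinfun_apply g b *\<^sub>R Blinfun (\<lambda>v::'a. representation Bs v b))"
      by (rule blinfun_eq_sum_representation[OF independent_Bs span_Bs finite_Bs])
    also have "\<dots> \<in> span ?S"
      by (intro span_sum span_mul span_base) auto
    finally show "g \<in> span ?S" .
  qed
  then show ?thesis
    using independent_span_bound[OF _ assms] finite_Bs by blast
qed

text \<open>Each functional lowers the dimension of the common kernel by at most one.\<close>
lemma dim_le_dim_annihilator_add_card: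
  fixes H :: "('a \<Rightarrow>\<^sub>L real) set"
  assumes "finite H"
  shows "dim (UNIV::'a set) \<le> dim (annihilator H) + card H"
  using assms
proof (induction H rule: finite_induct)
  case (insert h H)
  let ?S = "annihilator H" and ?S' = "annihilator (insert h H)"
  have "dim ?S \<le> dim ?S' + 1"
  proof (cases "\<forall>s\<in>?S. blinfun_apply h s = 0")
    case True
    then have "?S' = ?S"
      by (auto simp: annihilator_def)
    then show ?thesis by simp
  next
    case False
    then obtain s0 where s0: "s0 \<in> ?S" "blinfun_apply h s0 \<noteq> 0" by blast
    have "?S \<subseteq> span (insert s0 ?S')"
    proof
      fix s assume s: "s \<in> ?S"
      define c where "c = blinfun_apply h s / blinfun_apply h s0"
      have "s - c *\<^sub>R s0 \<in> ?S"
        by (intro subspace_diff[OF subspace_annihilator] subspace_mul[OF subspace_annihilator] s s0(1))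
      moreover have "blinfun_apply h (s - c *\<^sub>R s0) = 0"
        using s0(2) by (simp add: c_def blinfun.diff_right blinfun.scaleR_right)
      ultimately have "s - c *\<^sub>R s0 \<in> ?S'"
        by (simp add: annihilator_def)
      then have "(s - c *\<^sub>R s0) + c *\<^sub>R s0 \<in> span (insert s0 ?S')"
        by (intro span_add span_mul) (simp_all add: span_base)
      then show "s \<in> span (insert s0 ?S')"
        by simp
    qed
    then have "dim ?S \<le> dim (insert s0 ?S')"
      by (rule fd.dim_mono)
    also have "\<dots> \<le> dim ?S' + 1"
      by (simp add: fd.dim_insert)
    finally show ?thesis .
  qed
  with insert show ?case
    by simp
qed (simp add: annihilator_def)

text \<open>Extend a basis of the annihilator to a basis \<open>D\<close> of the space: every functional vanishing
  on the annihilator is a combination of the coordinate functionals of the other vectors of \<open>D\<close>.\<close>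
lemma dim_span_add_dim_annihilator_le:
  fixes G :: "('a \<Rightarrow>\<^sub>L real) set"
  shows "dim (span G) + dim (annihilator G) \<le> dim (UNIV::'a set)"
proof -
  obtain P where P: "P \<subseteq> annihilator G" "independent P" "annihilator G \<subseteq> span P"
      "card P = dim (annihilator G)"
    by (rule basis_exists)
  obtain D where D: "P \<subseteq> D" "independent D" "UNIV \<subseteq> span D"
    by (rule maximal_independent_subset_extend[OF subset_UNIV P(2)])
  then have "finite D" "span D = UNIV"
    by (auto intro: fd.finiteI_independent[OF D(2)])
  have card_D: "card D = dim (UNIV::'a set)"
    using dim_unique[OF subset_UNIV D(3) D(2) refl] by simp
  define \<delta> where "\<delta> b = Blinfun (\<lambda>v::'a. representation D v b)" for b
  have "span G \<subseteq> span (\<delta> ` (D - P))"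
  proof
    fix g assume g: "g \<in> span G"
    have "blinfun_apply g b = 0" if "b \<in> P" for b
    proof -
      have "b \<in> annihilator (span G)"
        using that P(1) annihilator_span[of G] by blast
      with g show ?thesis
        by (simp add: annihilator_def)
    qed
    have "g = (\<Sum>b\<in>D. blinfun_apply g b *\<^sub>R \<delta> b)"
      unfolding \<delta>_def by (rule blinfun_eq_sum_representation[OF D(2) \<open>span D = UNIV\<close> \<open>finite D\<close>])
    also have "\<dots> = (\<Sum>b\<in>D - P. blinfun_apply g b *\<^sub>R \<delta> b)"
      by (rule sum.mono_neutral_right[OF \<open>finite D\<close>]) (auto simp: \<open>\<And>b. b \<in> P \<Longrightarrow> blinfun_apply g b = 0\<close>)
    also have "\<dots> \<in> span (\<delta> ` (D - P))"
      by (intro span_sum span_mul span_base imageI)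
    finally show "g \<in> span (\<delta> ` (D - P))" .
  qed
  then have "dim (span G) \<le> card (\<delta> ` (D - P))"
    by (rule dim_le_card) (use \<open>finite D\<close> in simp)
  also have "\<dots> \<le> card D - card P"
    using card_image_le[of "D - P" \<delta>] card_Diff_subset[OF finite_subset[OF D(1) \<open>finite D\<close>] D(1)]
      \<open>finite D\<close> by simp
  finally show ?thesis
    using card_mono[OF \<open>finite D\<close> D(1)] card_D P(4) by linarith
qed

lemma dim_span_add_dim_annihilator:
  fixes G :: "('a \<Rightarrow>\<^sub>L real) set"
  shows "dim (span G) + dim (annihilator G) = dim (UNIV::'a set)"
proof -
  obtain Gb where Gb: "Gb \<subseteq> G" "independent Gb" "G \<subseteq> span Gb" "card Gb = dim G"
    by (rule basis_exists)
  have "annihilator G = annihilator Gb"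
    using annihilator_antimono[OF Gb(1)] annihilator_antimono[OF Gb(3)] annihilator_span[of Gb]
    by blast
  then have "dim (UNIV::'a set) \<le> dim (annihilator G) + dim G"
    using dim_le_dim_annihilator_add_card[OF independent_functionals_finite[OF Gb(2)]] Gb(4) by simp
  then show ?thesis
    using dim_span_add_dim_annihilator_le[of G] by (simp add: dim_span)
qed


lemma polyhedral_imp_finite_norming_family:
  assumes "finite {e::'a. e extreme_point_of cball 0 1}"
  shows "\<exists>\<Phi> :: ('a \<Rightarrow>\<^sub>L real) set. finite_norming_family \<Phi>"
  using finite_norming_family_exists[OF finite_exposed_extreme_sets[OF assms]
      sphere_subset_exposed_hulls[OF assms]] .

lemma face_dim_add_dim_span_supp_functionals:
  fixes x :: 'a and F :: "'a set" and \<Phi> :: "('a \<Rightarrow>\<^sub>L real) set"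
  assumes "finite_norming_family \<Phi>" "norm x = 1" "ball_face F" "x \<in> rel_interior F"
  shows "face_dim F + dim (span (supp_functionals x)) = dim (UNIV::'a set)"
  using finite_norming_family.span_face_differences_eq_annihilator[OF assms]
    dim_span_add_dim_annihilator[of "supp_functionals x"]
  by (simp add: face_dim_def dim_span add.commute)

end


lemma finite_span_imp_finite_basis_space:
  assumes "\<exists>B::'a::real_normed_vector set. finite B \<and> span B = UNIV"
  shows "\<exists>Bs::'a set. finite_basis_space Bs"
proof -
  obtain B :: "'a set" where B: "finite B" "span B = UNIV"
    using assms by blast
  obtain Bs where Bs: "Bs \<subseteq> B" "independent Bs" "B \<subseteq> span Bs"
    by (rule maximal_independent_subset)
  have "span Bs = UNIV"
    using span_mono[OF Bs(3)] B(2) by (simp add: span_span top.extremum_unique)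
  with Bs B have "finite_basis_space Bs"
    by unfold_locales (simp_all add: finite_subset)
  then show ?thesis ..
qed

theorem mainTheorem13:
  fixes x :: "'a::banach" and n k :: nat
  assumes "\<exists>B::'a set. finite B \<and> span B = UNIV"
    and "dim (UNIV::'a set) = n"
    and "polyhedral_space TYPE('a)"
    and "norm x = 1"
  shows "k_smooth k x \<longleftrightarrow>
    (\<exists>F::'a set. ball_face F \<and> int (face_dim F) = int n - int k \<and> x \<in> rel_interior F)"
proof -
  obtain Bs :: "'a set" where "finite_basis_space Bs"
    using finite_span_imp_finite_basis_space[OF assms(1)] by blast
  then interpret finite_basis_space Bs .
  obtain \<Phi> :: "('a \<Rightarrow>\<^sub>L real) set" where \<Phi>: "finite_norming_family \<Phi>"
    using polyhedral_imp_finite_norming_family assms(3) unfolding polyhedral_space_def by blast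
  then interpret finite_norming_family \<Phi> .
  have dim_face: "face_dim F + dim (span (supp_functionals x)) = n"
    if "ball_face F" "x \<in> rel_interior F" for F
    using face_dim_add_dim_span_supp_functionals[OF \<Phi> assms(4) that] assms(2) by simp
  have "ball_face (supp_face x)" "x \<in> rel_interior (supp_face x)"
    using ball_face_supp_face[OF supp_functionals_nonempty[OF assms(4)]]
      mem_rel_interior_supp_face[OF assms(4)] .
  then show ?thesis
    unfolding k_smooth_def using dim_face by force
qed

end
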